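(* Let $\kappa>0$, $D_\kappa=\pi/\sqrt\kappa$, let $X$ be a complete CAT($\kappa$) space such that $d(v,v')<D_\kappa/2$ for all $v,v'\in X$, and let $T\colon X\to X$ be firmly $\kappa$-vicinal. If $\mathrm{Fix}(T)$ is nonempty, then for each $x\in X$, $\{T^nx\}$ is $\Delta$-convergent to an element of $\mathrm{Fix}(T)$.
   Context: A CAT($\kappa$) space ($\kappa>0$) is a $D_\kappa$-geodesic metric space in which every geodesic triangle of perimeter $<2D_\kappa$ satisfies the comparison inequality $d(p,q)\le\rho_\kappa(\bar p,\bar q)$ relative to comparison triangles in $M_\kappa=(\mathbb S^2,\rho_{\mathbb S^2}/\sqrt\kappa)$. $\{x_n\}$ is $\Delta$-convergent to $p$ if for every subsequence $\{x_{n_i}\}$, $p$ is the unique minimizer of $z\mapsto\limsup_i d(x_{n_i},z)$. With $\tilde C_z=\cos\sqrt\kappa\, d(Tz,z)$, $T$ is firmly $\kappa$-vicinal if for all $x,y\in X$: $\bigl(\tilde C_x^2(1+\tilde C_y^2)\tilde C_y+\tilde C_y^2(1+\tilde C_x^2)\tilde C_x\bigr)\cos\sqrt\kappa d(Tx,Ty)\ge\tilde C_x^2(1+\tilde C_y^2)\cos\sqrt\kappa d(Tx,y)+\tilde C_y^2(1+\tilde C_x^2)\cos\sqrt\kappa d(Ty,x)$. *)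

theory Defs
  imports "HOL-Analysis.Analysis"
begin

definition Dk :: "real \<Rightarrow> real" where
  "Dk \<kappa> = pi / sqrt \<kappa>"

definition is_geodesic ::
  "('a \<Rightarrow> 'a \<Rightarrow> real) \<Rightarrow> 'a set \<Rightarrow> (real \<Rightarrow> 'a) \<Rightarrow> 'a \<Rightarrow> 'a \<Rightarrow> bool" where
  "is_geodesic d S \<gamma> x y \<longleftrightarrow>
     \<gamma> 0 = x \<and> \<gamma> (d x y) = y \<and> (\<forall>t\<in>{0..d x y}. \<gamma> t \<in> S) \<and>
     (\<forall>s\<in>{0..d x y}. \<forall>t\<in>{0..d x y}. d (\<gamma> s) (\<gamma> t) = \<bar>s - t\<bar>)"

definition D_geodesic :: "real \<Rightarrow> 'a::metric_space set \<Rightarrow> bool" where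
  "D_geodesic D S \<longleftrightarrow>
     (\<forall>x\<in>S. \<forall>y\<in>S. dist x y < D \<longrightarrow> (\<exists>\<gamma>. is_geodesic dist S \<gamma> x y))"

text \<open>Model space M_kappa: the unit sphere in R^3 with the metric arccos(u.v)/sqrt kappa.\<close>
definition S2 :: "(real^3) set" where
  "S2 = {u. norm u = 1}"

definition rho :: "real \<Rightarrow> real^3 \<Rightarrow> real^3 \<Rightarrow> real" where
  "rho \<kappa> u v = arccos (u \<bullet> v) / sqrt \<kappa>"

text \<open>A side of the triangle is given by a geodesic
  gamma_i, the corresponding side of the comparison triangle by a geodesic delta_i in
  M_kappa; the point gamma_i t corresponds to delta_i t.\<close>
definition CAT :: "real \<Rightarrow> 'a::metric_space set \<Rightarrow> bool" where
  "CAT \<kappa> S \<longleftrightarrow> \<kappa> > 0 \<and> D_geodesic (Dk \<kappa>) S \<and>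
    (\<forall>p\<in>S. \<forall>q\<in>S. \<forall>r\<in>S. \<forall>\<gamma>1 \<gamma>2 \<gamma>3 p' q' r' \<delta>1 \<delta>2 \<delta>3.
       dist p q + dist q r + dist r p < 2 * Dk \<kappa> \<and>
       is_geodesic dist S \<gamma>1 p q \<and> is_geodesic dist S \<gamma>2 q r \<and> is_geodesic dist S \<gamma>3 r p \<and>
       p' \<in> S2 \<and> q' \<in> S2 \<and> r' \<in> S2 \<and>
       rho \<kappa> p' q' = dist p q \<and> rho \<kappa> q' r' = dist q r \<and> rho \<kappa> r' p' = dist r p \<and>
       is_geodesic (rho \<kappa>) S2 \<delta>1 p' q' \<and> is_geodesic (rho \<kappa>) S2 \<delta>2 q' r' \<and>
       is_geodesic (rho \<kappa>) S2 \<delta>3 r' p' \<longrightarrow>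
       (let P = (\<lambda>t. (\<gamma>1 t, \<delta>1 t)) ` {0..dist p q} \<union>
                (\<lambda>t. (\<gamma>2 t, \<delta>2 t)) ` {0..dist q r} \<union>
                (\<lambda>t. (\<gamma>3 t, \<delta>3 t)) ` {0..dist r p}
        in \<forall>(x, x')\<in>P. \<forall>(y, y')\<in>P. dist x y \<le> rho \<kappa> x' y'))"

definition firmly_vicinal :: "real \<Rightarrow> ('a::metric_space \<Rightarrow> 'a) \<Rightarrow> bool" where
  "firmly_vicinal \<kappa> T \<longleftrightarrow>
     (\<forall>x y. let Cx = cos (sqrt \<kappa> * dist (T x) x); Cy = cos (sqrt \<kappa> * dist (T y) y) in
        (Cx\<^sup>2 * (1 + Cy\<^sup>2) * Cy + Cy\<^sup>2 * (1 + Cx\<^sup>2) * Cx) * cos (sqrt \<kappa> * dist (T x) (T y))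
        \<ge> Cx\<^sup>2 * (1 + Cy\<^sup>2) * cos (sqrt \<kappa> * dist (T x) y)
          + Cy\<^sup>2 * (1 + Cx\<^sup>2) * cos (sqrt \<kappa> * dist (T y) x))"

definition Fix :: "('a \<Rightarrow> 'a) \<Rightarrow> 'a set" where
  "Fix T = {x. T x = x}"

definition asym_rad :: "(nat \<Rightarrow> 'a::metric_space) \<Rightarrow> 'a \<Rightarrow> ereal" where
  "asym_rad x z = limsup (\<lambda>n. ereal (dist (x n) z))"

definition Delta_convergent :: "(nat \<Rightarrow> 'a::metric_space) \<Rightarrow> 'a \<Rightarrow> bool" where
  "Delta_convergent x p \<longleftrightarrow>
     (\<forall>r::nat \<Rightarrow> nat. strict_mono r \<longrightarrow>
        (\<forall>z. z \<noteq> p \<longrightarrow> asym_rad (x \<circ> r) p < asym_rad (x \<circ> r) z))"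

end

theory Submission
  imports Defs
begin

text \<open>Since all distances are below \<open>D\<^sub>\<kappa>/2\<close>, the quantity \<open>cos (\<surd>\<kappa> d)\<close> is positive and
  decreasing in \<open>d\<close>, so it is convenient to work with cosines of distances throughout.
  With a fixed point \<open>p\<close>, firm vicinality yields
  \<open>cos d(x,p) \<le> cos d(Tx,x) \<cdot> cos d(Tx,p)\<close>: the orbit is Fejer monotone with respect to
  \<open>Fix T\<close> and asymptotically regular.  Comparing with a spherical triangle, the CAT(\<kappa>)
  condition gives a midpoint inequality
  \<open>cos d(y,u) + cos d(y,v) \<le> 2 cos (d(u,v)/2) cos d(y,m)\<close>, which passes to asymptotic radii;
  hence asymptotic centres are unique, and by completeness they exist.
  Firm vicinality and asymptotic regularity show that the asymptotic centre of every
  subsequence of the orbit is a fixed point, and since \<open>d(T\<^sup>n x, p)\<close> converges for every fixed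
  point \<open>p\<close>, all these centres coincide.\<close>

subsection \<open>Asymptotic radius\<close>

definition asym_radius :: "(nat \<Rightarrow> 'a::metric_space) \<Rightarrow> 'a \<Rightarrow> real" where
  "asym_radius y z = real_of_ereal (asym_rad y z)"

definition is_asym_center :: "(nat \<Rightarrow> 'a::metric_space) \<Rightarrow> 'a \<Rightarrow> bool" where
  "is_asym_center y u \<longleftrightarrow> (\<forall>z. asym_radius y u \<le> asym_radius y z)"

lemma asym_radius_bounds:
  assumes "\<And>n. dist (y n) z \<le> B"
  shows "asym_rad y z = ereal (asym_radius y z)" "0 \<le> asym_radius y z" "asym_radius y z \<le> B"
proof -
  have "0 \<le> asym_rad y z" unfolding asym_rad_def
    by (rule le_Limsup) auto
  moreover have "asym_rad y z \<le> ereal B" unfolding asym_rad_def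
    by (rule Limsup_bounded) (use assms in auto)
  ultimately show "asym_rad y z = ereal (asym_radius y z)" "0 \<le> asym_radius y z" "asym_radius y z \<le> B"
    unfolding asym_radius_def by (cases "asym_rad y z"; simp)+
qed

lemma asym_radius_le:
  assumes "\<And>n. dist (y n) z \<le> B" "eventually (\<lambda>n. dist (y n) z \<le> a) sequentially"
  shows "asym_radius y z \<le> a"
proof -
  have "asym_rad y z \<le> ereal a" unfolding asym_rad_def
    by (rule Limsup_bounded) (use assms(2) in auto)
  then show ?thesis using asym_radius_bounds[OF assms(1)] by auto
qed

lemma eventually_dist_less_asym_radius:
  assumes "\<And>n. dist (y n) z \<le> B" "e > 0"
  shows "eventually (\<lambda>n. dist (y n) z < asym_radius y z + e) sequentially"
proof -
  have "asym_rad y z < ereal (asym_radius y z + e)"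
    using asym_radius_bounds[OF assms(1)] assms(2) by auto
  from Limsup_lessD[OF this[unfolded asym_rad_def]] show ?thesis by auto
qed

lemma asym_radius_eq_limit:
  assumes "\<And>n. dist (y n) z \<le> B" "(\<lambda>n. dist (y n) z) \<longlonglongrightarrow> L"
  shows "asym_radius y z = L"
proof -
  have "(\<lambda>n. ereal (dist (y n) z)) \<longlonglongrightarrow> ereal L" using assms(2) by auto
  from lim_imp_Limsup[OF _ this] have "asym_rad y z = ereal L" unfolding asym_rad_def by simp
  then show ?thesis using asym_radius_bounds[OF assms(1)] by auto
qed

lemma asym_radius_triangle:
  assumes "\<And>n. dist (y n) z \<le> B" "\<And>n. dist (y n) w \<le> B"
  shows "asym_radius y z \<le> asym_radius y w + dist z w"
proof (rule field_le_epsilon)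
  fix e :: real assume "0 < e"
  have "eventually (\<lambda>n. dist (y n) z \<le> asym_radius y w + dist z w + e) sequentially"
    using eventually_dist_less_asym_radius[of y w B, OF assms(2) \<open>0 < e\<close>]
  proof eventually_elim
    case (elim n)
    have "dist (y n) z \<le> dist (y n) w + dist w z" by (rule dist_triangle)
    then show ?case using elim by (simp add: dist_commute)
  qed
  then show "asym_radius y z \<le> asym_radius y w + dist z w + e"
    by (rule asym_radius_le[OF assms(1)])
qed

subsection \<open>Triangles on the model sphere\<close>

lemma inner_great_circle:
  fixes P W :: "real^3"
  assumes "P \<bullet> P = 1" "W \<bullet> W = 1" "P \<bullet> W = 0"
  shows "(cos a *\<^sub>R P + sin a *\<^sub>R W) \<bullet> (cos b *\<^sub>R P + sin b *\<^sub>R W) = cos (a - b)"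
proof -
  have "W \<bullet> P = 0" using assms(3) by (simp add: inner_commute)
  then show ?thesis using assms
    by (simp add: inner_add_left inner_add_right cos_diff algebra_simps)
qed

lemma great_circle_is_geodesic:
  fixes P W :: "real^3"
  assumes \<kappa>: "\<kappa> > 0" and PW: "P \<bullet> P = 1" "W \<bullet> W = 1" "P \<bullet> W = 0"
    and \<theta>: "0 \<le> \<theta>" "\<theta> \<le> pi"
  shows "rho \<kappa> P (cos \<theta> *\<^sub>R P + sin \<theta> *\<^sub>R W) = \<theta> / sqrt \<kappa>"
    and "is_geodesic (rho \<kappa>) S2 (\<lambda>t. cos (sqrt \<kappa> * t) *\<^sub>R P + sin (sqrt \<kappa> * t) *\<^sub>R W)
           P (cos \<theta> *\<^sub>R P + sin \<theta> *\<^sub>R W)"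
proof -
  define g where "g = (\<lambda>t. cos (sqrt \<kappa> * t) *\<^sub>R P + sin (sqrt \<kappa> * t) *\<^sub>R W)"
  have s: "sqrt \<kappa> > 0" using \<kappa> by simp
  have g_inner: "g a \<bullet> g b = cos (sqrt \<kappa> * a - sqrt \<kappa> * b)" for a b
    unfolding g_def by (rule inner_great_circle[OF PW])
  have "P \<bullet> (cos \<theta> *\<^sub>R P + sin \<theta> *\<^sub>R W) = cos (0 - \<theta>)"
    using inner_great_circle[OF PW, of 0 \<theta>] by simp
  then show rho_end: "rho \<kappa> P (cos \<theta> *\<^sub>R P + sin \<theta> *\<^sub>R W) = \<theta> / sqrt \<kappa>"
    unfolding rho_def using \<theta> by (simp add: arccos_cos)
  have "g 0 = P" "g (\<theta> / sqrt \<kappa>) = cos \<theta> *\<^sub>R P + sin \<theta> *\<^sub>R W"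
    unfolding g_def using s by simp_all
  moreover have "g t \<in> S2" for t
    using g_inner[of t t] unfolding S2_def by (simp add: norm_eq_1)
  moreover have "rho \<kappa> (g a) (g b) = \<bar>a - b\<bar>"
    if "a \<in> {0..\<theta>/sqrt \<kappa>}" "b \<in> {0..\<theta>/sqrt \<kappa>}" for a b
  proof -
    have "\<bar>a - b\<bar> \<le> \<theta> / sqrt \<kappa>" using that by auto
    then have "sqrt \<kappa> * \<bar>a - b\<bar> \<le> \<theta>" using s by (simp add: field_simps)
    then have "\<bar>sqrt \<kappa> * a - sqrt \<kappa> * b\<bar> \<le> pi" using \<theta> s
      by (simp add: abs_mult right_diff_distrib[symmetric])
    then show ?thesis
      unfolding rho_def g_inner using s
      by (simp add: arccos_cos_eq_abs right_diff_distrib[symmetric] abs_mult)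
  qed
  ultimately show "is_geodesic (rho \<kappa>) S2 g P (cos \<theta> *\<^sub>R P + sin \<theta> *\<^sub>R W)"
    unfolding is_geodesic_def rho_end by auto
qed

lemma sphere_geodesic_exists:
  fixes P Q :: "real^3"
  assumes \<kappa>: "\<kappa> > 0" and PQ: "P \<bullet> P = 1" "Q \<bullet> Q = 1" "P \<bullet> Q = cos \<theta>"
    and \<theta>: "0 \<le> \<theta>" "\<theta> < pi"
  shows "rho \<kappa> P Q = \<theta> / sqrt \<kappa>" "\<exists>g. is_geodesic (rho \<kappa>) S2 g P Q"
proof -
  show rho_PQ: "rho \<kappa> P Q = \<theta> / sqrt \<kappa>"
    unfolding rho_def PQ(3) using \<theta> by (simp add: arccos_cos)
  show "\<exists>g. is_geodesic (rho \<kappa>) S2 g P Q"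
  proof (cases "\<theta> = 0")
    case True
    then have "(P - Q) \<bullet> (P - Q) = 0"
      using PQ by (simp add: inner_diff_left inner_diff_right inner_commute)
    then have "P = Q" by simp
    moreover have "P \<in> S2" unfolding S2_def using PQ by (simp add: norm_eq_1)
    ultimately have "is_geodesic (rho \<kappa>) S2 (\<lambda>t. P) P Q"
      unfolding is_geodesic_def rho_PQ using True by (simp add: rho_def PQ)
    then show ?thesis by blast
  next
    case False
    then have sin_pos: "sin \<theta> > 0" using \<theta> by (intro sin_gt_zero) auto
    define W where "W = (1 / sin \<theta>) *\<^sub>R (Q - cos \<theta> *\<^sub>R P)"
    have "Q \<bullet> P = cos \<theta>" using PQ(3) by (simp only: inner_commute)
    then have "(Q - cos \<theta> *\<^sub>R P) \<bullet> (Q - cos \<theta> *\<^sub>R P) = 1 - (cos \<theta>)\<^sup>2"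
      using PQ by (simp add: inner_diff_left inner_diff_right power2_eq_square)
    then have "(Q - cos \<theta> *\<^sub>R P) \<bullet> (Q - cos \<theta> *\<^sub>R P) = (sin \<theta>)\<^sup>2"
      by (simp add: sin_squared_eq)
    then have "W \<bullet> W = 1" unfolding W_def using sin_pos by (simp add: power2_eq_square)
    moreover have "P \<bullet> W = 0" unfolding W_def using PQ by (simp add: inner_diff_right)
    moreover have "Q = cos \<theta> *\<^sub>R P + sin \<theta> *\<^sub>R W" unfolding W_def using sin_pos by simp
    ultimately show ?thesis
      using great_circle_is_geodesic(2)[OF \<kappa> PQ(1)] \<theta> by fastforce
  qed
qed

text \<open>The parameter \<open>k\<close> is the cosine of the angle at the vertex where the sides \<open>a\<close> and \<open>c\<close>
  meet in a spherical triangle with sides \<open>a, b, c\<close> (spherical law of cosines).\<close>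
lemma spherical_cosine_law_angle:
  fixes a b c :: real
  assumes "0 \<le> a" "a < pi/2" "0 \<le> c" "c < pi/2" "\<bar>a - c\<bar> \<le> b" "b \<le> a + c"
  shows "\<exists>k. \<bar>k\<bar> \<le> 1 \<and> sin a * sin c * k = cos b - cos a * cos c"
proof (cases "a = 0 \<or> c = 0")
  case True
  then have "b = (if a = 0 then c else a)" using assms by auto
  then show ?thesis using True by (intro exI[of _ 0]) auto
next
  case False
  have "sin a > 0" "sin c > 0" using False assms by (auto intro!: sin_gt_zero)
  then have sin_pos: "sin a * sin c > 0" by simp
  have "cos b \<le> cos \<bar>a - c\<bar>"
    by (rule cos_monotone_0_pi_le) (use assms in linarith)+
  then have upper: "cos b \<le> cos a * cos c + sin a * sin c"
    by (cases "a \<ge> c") (simp_all add: cos_diff mult.commute)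
  have "cos (a + c) \<le> cos b"
    by (rule cos_monotone_0_pi_le) (use assms in linarith)+
  then have lower: "cos a * cos c - sin a * sin c \<le> cos b" by (simp add: cos_add)
  define k where "k = (cos b - cos a * cos c) / (sin a * sin c)"
  have "\<bar>k\<bar> \<le> 1" unfolding k_def using upper lower sin_pos by (simp add: abs_le_iff field_simps)
  moreover have "sin a * sin c * k = cos b - cos a * cos c"
    unfolding k_def using \<open>sin a > 0\<close> \<open>sin c > 0\<close> by simp
  ultimately show ?thesis by blast
qed

definition e1 :: "real^3" where "e1 = axis 1 1"
definition e2 :: "real^3" where "e2 = axis 2 1"
definition e3 :: "real^3" where "e3 = axis 3 1"

lemma inner_e [simp]:
  "e1 \<bullet> e1 = 1" "e2 \<bullet> e2 = 1" "e3 \<bullet> e3 = 1"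
  "e1 \<bullet> e2 = 0" "e2 \<bullet> e1 = 0" "e1 \<bullet> e3 = 0" "e3 \<bullet> e1 = 0" "e2 \<bullet> e3 = 0" "e3 \<bullet> e2 = 0"
  by (simp_all add: e1_def e2_def e3_def inner_axis_axis)

text \<open>Coordinates of a spherical triangle with vertices \<open>e1, v', y'\<close>, angular sides
  \<open>a = \<angle>(e1,v'), b = \<angle>(v',y'), c = \<angle>(y',e1)\<close>; \<open>m'\<close> is the midpoint of the side \<open>e1 v'\<close>.\<close>
lemma inner_spherical_triangle:
  fixes a b c k :: real
  assumes k: "\<bar>k\<bar> \<le> 1" "sin a * sin c * k = cos b - cos a * cos c"
  defines "v' \<equiv> cos a *\<^sub>R e1 + sin a *\<^sub>R e2"
    and "y' \<equiv> cos c *\<^sub>R e1 + (sin c * k) *\<^sub>R e2 + (sin c * sqrt (1 - k\<^sup>2)) *\<^sub>R e3"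
    and "m' \<equiv> cos (a/2) *\<^sub>R e1 + sin (a/2) *\<^sub>R e2"
  shows "v' \<bullet> v' = 1" "y' \<bullet> y' = 1" "v' \<bullet> y' = cos b" "y' \<bullet> e1 = cos c"
    "2 * cos (a/2) * (m' \<bullet> y') = cos c + cos b"
proof -
  show "v' \<bullet> v' = 1" unfolding v'_def
    by (simp add: inner_add_left inner_add_right power2_eq_square[symmetric])
  have "(sqrt (1 - k\<^sup>2))\<^sup>2 = 1 - k\<^sup>2" using k(1) by (simp add: abs_square_le_1)
  moreover have "y' \<bullet> y' = (cos c)\<^sup>2 + (sin c)\<^sup>2 * (k\<^sup>2 + (sqrt (1 - k\<^sup>2))\<^sup>2)" unfolding y'_def
    by (simp add: inner_add_left inner_add_right power2_eq_square algebra_simps)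
  ultimately show "y' \<bullet> y' = 1" by simp
  show "v' \<bullet> y' = cos b" unfolding v'_def y'_def using k(2)
    by (simp add: inner_add_left inner_add_right algebra_simps)
  show "y' \<bullet> e1 = cos c" unfolding y'_def by (simp add: inner_add_left)
  have "m' \<bullet> y' = cos (a/2) * cos c + sin (a/2) * (sin c * k)" unfolding m'_def y'_def
    by (simp add: inner_add_left inner_add_right)
  moreover have "cos a = 2 * (cos (a/2))\<^sup>2 - 1" "sin a = 2 * sin (a/2) * cos (a/2)"
    using cos_double_cos[of "a/2"] sin_double[of "a/2"] by simp_all
  ultimately have "2 * cos (a/2) * (m' \<bullet> y') = (1 + cos a) * cos c + sin a * sin c * k"
    by (simp add: algebra_simps power2_eq_square)
  also have "\<dots> = cos c + cos b" using k(2) by (simp add: algebra_simps)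
  finally show "2 * cos (a/2) * (m' \<bullet> y') = cos c + cos b" .
qed

lemma sphere_comparison_triangle:
  assumes \<kappa>: "\<kappa> > 0"
    and a: "0 \<le> a" "sqrt \<kappa> * a < pi/2" and c: "0 \<le> c" "sqrt \<kappa> * c < pi/2"
    and tri: "\<bar>a - c\<bar> \<le> b" "b \<le> a + c"
  obtains p' q' r' \<delta>1 \<delta>2 \<delta>3 where "p' \<in> S2" "q' \<in> S2" "r' \<in> S2"
    "rho \<kappa> p' q' = a" "rho \<kappa> q' r' = b" "rho \<kappa> r' p' = c"
    "is_geodesic (rho \<kappa>) S2 \<delta>1 p' q'" "is_geodesic (rho \<kappa>) S2 \<delta>2 q' r'"
    "is_geodesic (rho \<kappa>) S2 \<delta>3 r' p'"
    "cos (sqrt \<kappa> * b) + cos (sqrt \<kappa> * c) = 2 * cos (sqrt \<kappa> * a / 2) * (\<delta>1 (a/2) \<bullet> r')"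
proof -
  define s where "s = sqrt \<kappa>"
  have s: "s > 0" unfolding s_def using \<kappa> by simp
  have "s * \<bar>a - c\<bar> \<le> s * b" "s * b \<le> s * (a + c)"
    using tri s by (auto intro: mult_left_mono)
  then have tri': "\<bar>s * a - s * c\<bar> \<le> s * b" "s * b \<le> s * a + s * c"
    using s by (simp_all add: abs_mult right_diff_distrib[symmetric] distrib_left)
  obtain k where k: "\<bar>k\<bar> \<le> 1" "sin (s * a) * sin (s * c) * k = cos (s * b) - cos (s * a) * cos (s * c)"
    using spherical_cosine_law_angle[OF _ _ _ _ tri'] a c s unfolding s_def by auto
  define v' where "v' = cos (s * a) *\<^sub>R e1 + sin (s * a) *\<^sub>R e2"
  define y' where "y' = cos (s * c) *\<^sub>R e1 + (sin (s * c) * k) *\<^sub>R e2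
    + (sin (s * c) * sqrt (1 - k\<^sup>2)) *\<^sub>R e3"
  define \<delta>1 where "\<delta>1 = (\<lambda>t. cos (s * t) *\<^sub>R e1 + sin (s * t) *\<^sub>R e2)"
  note sph = inner_spherical_triangle[OF k, folded v'_def y'_def]
  have "0 \<le> s * a" "s * a \<le> pi" "0 \<le> s * b" "s * b < pi" "0 \<le> s * c" "s * c < pi"
    using a c s tri' by (simp_all add: s_def)
  note angles = this
  have rho1: "rho \<kappa> e1 v' = a" and geo1: "is_geodesic (rho \<kappa>) S2 \<delta>1 e1 v'"
    using great_circle_is_geodesic[OF \<kappa>, of e1 e2 "s * a"] angles s
    unfolding v'_def \<delta>1_def s_def by auto
  obtain \<delta>2 where geo2: "is_geodesic (rho \<kappa>) S2 \<delta>2 v' y'" and rho2: "rho \<kappa> v' y' = b"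
    using sphere_geodesic_exists[OF \<kappa> sph(1,2,3)] angles s unfolding s_def by auto
  obtain \<delta>3 where geo3: "is_geodesic (rho \<kappa>) S2 \<delta>3 y' e1" and rho3: "rho \<kappa> y' e1 = c"
    using sphere_geodesic_exists[OF \<kappa> sph(2) _ sph(4)] angles s unfolding s_def by auto
  have "e1 \<in> S2" "v' \<in> S2" "y' \<in> S2" unfolding S2_def using sph by (auto simp: norm_eq_1)
  moreover have "cos (s * b) + cos (s * c) = 2 * cos (s * a / 2) * (\<delta>1 (a/2) \<bullet> y')"
    using sph(5) unfolding \<delta>1_def by simp
  ultimately show thesis
    using that rho1 rho2 rho3 geo1 geo2 geo3 unfolding s_def by blast
qed

lemma inner_le_cos_if_le_rho:
  assumes \<kappa>: "\<kappa> > 0" and "x' \<in> S2" "y' \<in> S2"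
    and t: "0 \<le> t" "sqrt \<kappa> * t \<le> pi" "t \<le> rho \<kappa> x' y'"
  shows "x' \<bullet> y' \<le> cos (sqrt \<kappa> * t)"
proof -
  have "\<bar>x' \<bullet> y'\<bar> \<le> 1"
    using Cauchy_Schwarz_ineq2[of x' y'] assms(2,3) unfolding S2_def by simp
  moreover have "sqrt \<kappa> * t \<le> arccos (x' \<bullet> y')"
    using t(3) \<kappa> unfolding rho_def by (simp add: field_simps)
  ultimately have "cos (arccos (x' \<bullet> y')) \<le> cos (sqrt \<kappa> * t)"
    using t \<kappa> by (intro cos_monotone_0_pi_le) (auto intro: arccos_ubound)
  then show ?thesis using \<open>\<bar>x' \<bullet> y'\<bar> \<le> 1\<close> by (simp add: cos_arccos_abs)
qed


subsection \<open>The midpoint inequality in CAT(\<kappa>) spaces\<close>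

lemma CAT_comparison_side_vertex:
  fixes p q r :: "'a::metric_space"
  assumes "CAT \<kappa> (UNIV :: 'a set)"
    and "dist p q + dist q r + dist r p < 2 * Dk \<kappa>"
    and "is_geodesic dist UNIV \<gamma>1 p q" "is_geodesic dist UNIV \<gamma>2 q r" "is_geodesic dist UNIV \<gamma>3 r p"
    and "p' \<in> S2" "q' \<in> S2" "r' \<in> S2"
    and "rho \<kappa> p' q' = dist p q" "rho \<kappa> q' r' = dist q r" "rho \<kappa> r' p' = dist r p"
    and "is_geodesic (rho \<kappa>) S2 \<delta>1 p' q'" "is_geodesic (rho \<kappa>) S2 \<delta>2 q' r'"
    and "is_geodesic (rho \<kappa>) S2 \<delta>3 r' p'"
    and "t \<in> {0..dist p q}"
  shows "dist (\<gamma>1 t) r \<le> rho \<kappa> (\<delta>1 t) r'"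
proof -
  have "\<gamma>3 0 = r" "\<delta>3 0 = r'" using assms(5,14) unfolding is_geodesic_def by auto
  moreover have "(\<gamma>1 t, \<delta>1 t) \<in> (\<lambda>t. (\<gamma>1 t, \<delta>1 t)) ` {0..dist p q}" using assms(15) by blast
  moreover have "(\<gamma>3 0, \<delta>3 0) \<in> (\<lambda>t. (\<gamma>3 t, \<delta>3 t)) ` {0..dist r p}" by auto
  moreover note assms(1)[unfolded CAT_def, THEN conjunct2, THEN conjunct2, rule_format,
      of p q r \<gamma>1 \<gamma>2 \<gamma>3 p' q' r' \<delta>1 \<delta>2 \<delta>3]
  ultimately show ?thesis using assms(2-14) unfolding Let_def
    by (force simp del: atLeastAtMost_iff)
qed

lemma CAT_midpoint_cos_inequality:
  fixes u v :: "'a::metric_space"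
  assumes \<kappa>: "\<kappa> > 0" and cat: "CAT \<kappa> (UNIV :: 'a set)"
    and diam: "\<forall>v v' :: 'a. dist v v' < Dk \<kappa> / 2"
  obtains m where "\<And>y. cos (sqrt \<kappa> * dist y u) + cos (sqrt \<kappa> * dist y v)
                \<le> 2 * cos (sqrt \<kappa> * dist u v / 2) * cos (sqrt \<kappa> * dist y m)"
proof -
  have s: "sqrt \<kappa> > 0" using \<kappa> by simp
  have small: "sqrt \<kappa> * dist x z < pi / 2" for x z :: 'a
    using diam[rule_format, of x z] s unfolding Dk_def by (simp add: field_simps)
  have below_pi: "sqrt \<kappa> * dist x z \<le> pi" for x z :: 'a
    using small[of x z] pi_gt_zero by linarith
  have Dk_pos: "Dk \<kappa> > 0" unfolding Dk_def using s by simp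
  have geodesic: "\<exists>g. is_geodesic dist UNIV g x z" for x z :: 'a
  proof -
    have "dist x z < Dk \<kappa>" using diam[rule_format, of x z] Dk_pos by linarith
    moreover have "D_geodesic (Dk \<kappa>) (UNIV :: 'a set)" using cat unfolding CAT_def by blast
    ultimately show ?thesis unfolding D_geodesic_def by blast
  qed
  obtain g1 where g1: "is_geodesic dist UNIV g1 u v" using geodesic by blast
  have "cos (sqrt \<kappa> * dist y u) + cos (sqrt \<kappa> * dist y v)
    \<le> 2 * cos (sqrt \<kappa> * dist u v / 2) * cos (sqrt \<kappa> * dist y (g1 (dist u v / 2)))" for y
  proof -
    obtain g2 where g2: "is_geodesic dist UNIV g2 v y" using geodesic by blast
    obtain g3 where g3: "is_geodesic dist UNIV g3 y u" using geodesic by blast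
    have "\<bar>dist u v - dist y u\<bar> \<le> dist v y" "dist v y \<le> dist u v + dist y u"
      using dist_triangle[of u v y] dist_triangle[of y u v] dist_triangle[of v y u]
      by (auto simp: dist_commute)
    then obtain p' q' r' \<delta>1 \<delta>2 \<delta>3 where S: "p' \<in> S2" "q' \<in> S2" "r' \<in> S2"
      and rhos: "rho \<kappa> p' q' = dist u v" "rho \<kappa> q' r' = dist v y" "rho \<kappa> r' p' = dist y u"
      and geos: "is_geodesic (rho \<kappa>) S2 \<delta>1 p' q'" "is_geodesic (rho \<kappa>) S2 \<delta>2 q' r'"
        "is_geodesic (rho \<kappa>) S2 \<delta>3 r' p'"
      and mid: "cos (sqrt \<kappa> * dist v y) + cos (sqrt \<kappa> * dist y u)
        = 2 * cos (sqrt \<kappa> * dist u v / 2) * (\<delta>1 (dist u v / 2) \<bullet> r')"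
      using sphere_comparison_triangle[OF \<kappa> zero_le_dist small zero_le_dist small] by blast
    have "dist u v + dist v y + dist y u < 2 * Dk \<kappa>"
      using diam[rule_format, of u v] diam[rule_format, of v y] diam[rule_format, of y u] Dk_pos
      by linarith
    then have "dist (g1 (dist u v / 2)) y \<le> rho \<kappa> (\<delta>1 (dist u v / 2)) r'"
      by (rule CAT_comparison_side_vertex[OF cat _ g1 g2 g3 S rhos geos]) simp
    moreover have "\<delta>1 (dist u v / 2) \<in> S2" using geos(1) rhos(1) unfolding is_geodesic_def by simp
    ultimately have "\<delta>1 (dist u v / 2) \<bullet> r' \<le> cos (sqrt \<kappa> * dist (g1 (dist u v / 2)) y)"
      using below_pi S by (intro inner_le_cos_if_le_rho[OF \<kappa>]) auto
    moreover have "0 \<le> cos (sqrt \<kappa> * dist u v / 2)"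
    proof -
      have "0 \<le> sqrt \<kappa> * dist u v" using s by simp
      then show ?thesis using below_pi[of u v] pi_gt_zero by (intro cos_ge_zero) linarith+
    qed
    ultimately show ?thesis
      using mid by (simp add: dist_commute mult_left_mono add.commute)
  qed
  then show thesis using that by blast
qed

lemma abs_cos_diff_le: "\<bar>cos x - cos y\<bar> \<le> \<bar>x - y\<bar>" for x y :: real
proof -
  have "\<bar>cos x - cos y\<bar> = 2 * \<bar>sin ((x + y) / 2)\<bar> * \<bar>sin ((y - x) / 2)\<bar>"
    unfolding cos_diff_cos by (simp add: abs_mult)
  also have "\<dots> \<le> 2 * 1 * \<bar>(y - x) / 2\<bar>"
    by (intro mult_mono abs_sin_x_le_abs_x) auto
  finally show ?thesis by simp
qed

text \<open>The firm vicinality inequality for the pair \<open>(x, u)\<close>, with \<open>a = C\<^sub>x\<close>, \<open>C = C\<^sub>u\<close>, when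
  \<open>cos d(Tx, Tu) = b\<close> and \<open>cos d(Tx, u) = e\<close> differ by at most \<open>h\<close> from \<open>f = cos d(x, Tu)\<close> and
  \<open>g = cos d(x, u)\<close>: then \<open>Tu\<close> is nearly as close to \<open>x\<close> as \<open>u\<close> is.\<close>
lemma vicinal_perturbation_bound:
  fixes a C b e f g h :: real
  assumes a: "1/2 \<le> a" "a \<le> 1" and C: "0 < C" "C \<le> 1" and b: "0 \<le> b" and f: "0 \<le> f"
    and bf: "b \<le> f + h" and eg: "g - h \<le> e" and h: "0 \<le> h"
    and V: "(a^2*(1+C^2)*C + C^2*(1+a^2)*a)*b \<ge> a^2*(1+C^2)*e + C^2*(1+a^2)*f"
  shows "g - 10*h \<le> f"
proof -
  define P where "P = a^2*(1+C^2)"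
  define Q where "Q = C^2*(1+a^2)"
  have "P*(C*b - e) + Q*(a*b - f) \<ge> 0"
    using V unfolding P_def Q_def by (simp add: algebra_simps)
  moreover have "Q*(a*b - f) \<le> 2*(1+C^2)*h"
  proof -
    have "a * b \<le> b" using a b by (simp add: mult_left_le_one_le)
    then have "Q*(a*b - f) \<le> Q * h" using bf unfolding Q_def by (intro mult_left_mono) auto
    moreover have "C^2 * a^2 \<le> 1" using a C by (intro mult_le_one power_le_one) auto
    then have "Q \<le> 2*(1+C^2)" unfolding Q_def by (simp add: algebra_simps) (smt (verit) zero_le_power2)
    ultimately show ?thesis using h by (meson mult_right_mono order.trans)
  qed
  moreover have "P*(C*b - e) \<le> P*(C*f - g + 2*h)"
  proof -
    have "C*b \<le> C*(f+h)" "C*h \<le> h" using bf C h by (simp_all add: mult_left_le_one_le)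
    then show ?thesis using eg unfolding P_def by (intro mult_left_mono) (auto simp: algebra_simps)
  qed
  ultimately have "0 \<le> (1+C^2) * (a^2*(C*f - g + 2*h) + 2*h)"
    unfolding P_def by (simp add: algebra_simps)
  moreover have "0 < 1 + C^2" by (simp add: add_pos_nonneg)
  ultimately have X: "0 \<le> a^2*(C*f - g + 2*h) + 2*h" by (simp add: zero_le_mult_iff)
  have "C*f - g + 2*h \<ge> -8*h"
  proof (cases "C*f - g + 2*h \<ge> 0")
    case False
    have "1/4 \<le> a^2" using a power_mono[of "1/2" a 2] by (simp add: power2_eq_square)
    then have "a^2 * (C*f - g + 2*h) \<le> 1/4 * (C*f - g + 2*h)"
      using False by (intro mult_right_mono_neg) auto
    then show ?thesis using X by simp
  qed (use h in simp)
  moreover have "C*f \<le> f" using C f by (simp add: mult_left_le_one_le)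
  ultimately show ?thesis by simp
qed

subsection \<open>Spaces of diameter below \<open>D\<^sub>\<kappa>/2\<close>\<close>

context
  fixes \<kappa> :: real
  assumes \<kappa>_pos: "\<kappa> > 0"
    and diam: "\<forall>v v' :: 'a::metric_space. dist v v' < Dk \<kappa> / 2"
begin

definition cosk :: "real \<Rightarrow> real" where
  "cosk t = cos (sqrt \<kappa> * t)"

lemma sqrt_kappa_pos: "sqrt \<kappa> > 0"
  using \<kappa>_pos by simp

lemma sqrt_kappa_half_Dk: "sqrt \<kappa> * (Dk \<kappa> / 2) = pi / 2"
  unfolding Dk_def using \<kappa>_pos by simp

lemma half_Dk_pos: "Dk \<kappa> / 2 > 0"
  unfolding Dk_def using \<kappa>_pos by simp

lemma dist_less_half_Dk: "dist (x::'a) z < Dk \<kappa> / 2"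
  using diam by blast

lemma dist_le_half_Dk: "dist (x::'a) z \<le> Dk \<kappa> / 2"
  using dist_less_half_Dk less_imp_le by blast

lemma cosk_zero [simp]: "cosk 0 = 1"
  unfolding cosk_def by simp

lemma cosk_le_one: "cosk t \<le> 1"
  unfolding cosk_def by simp

lemma sqrt_kappa_mult_le:
  "0 \<le> t \<Longrightarrow> t \<le> Dk \<kappa> / 2 \<Longrightarrow> 0 \<le> sqrt \<kappa> * t \<and> sqrt \<kappa> * t \<le> pi / 2"
  using mult_left_mono[of t "Dk \<kappa> / 2" "sqrt \<kappa>"] sqrt_kappa_pos sqrt_kappa_half_Dk by simp

lemma sqrt_kappa_mult_less: "t < Dk \<kappa> / 2 \<Longrightarrow> sqrt \<kappa> * t < pi / 2"
  using mult_strict_left_mono[of t "Dk \<kappa> / 2" "sqrt \<kappa>"] sqrt_kappa_pos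
  unfolding sqrt_kappa_half_Dk by blast

lemma cosk_pos: "0 \<le> t \<Longrightarrow> t < Dk \<kappa> / 2 \<Longrightarrow> cosk t > 0"
  unfolding cosk_def using sqrt_kappa_mult_le sqrt_kappa_mult_less pi_gt_zero
  by (intro cos_gt_zero_pi) (smt (verit))+

lemma cosk_nonneg: "0 \<le> t \<Longrightarrow> t \<le> Dk \<kappa> / 2 \<Longrightarrow> cosk t \<ge> 0"
  unfolding cosk_def using sqrt_kappa_mult_le pi_gt_zero
  by (intro cos_ge_zero) (smt (verit))+

lemma cosk_dist_pos: "cosk (dist (x::'a) z) > 0"
  using cosk_pos dist_less_half_Dk by simp

lemma cosk_le_iff:
  assumes "0 \<le> t1" "t1 \<le> Dk \<kappa> / 2" "0 \<le> t2" "t2 \<le> Dk \<kappa> / 2"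
  shows "cosk t1 \<le> cosk t2 \<longleftrightarrow> t2 \<le> t1"
proof -
  have "sqrt \<kappa> * t1 \<le> pi" "sqrt \<kappa> * t2 \<le> pi"
    using sqrt_kappa_mult_le[OF assms(1,2)] sqrt_kappa_mult_le[OF assms(3,4)] pi_gt_zero
    by linarith+
  then have "cosk t1 \<le> cosk t2 \<longleftrightarrow> sqrt \<kappa> * t2 \<le> sqrt \<kappa> * t1"
    unfolding cosk_def using assms sqrt_kappa_pos by (intro cos_mono_le_eq) auto
  then show ?thesis using sqrt_kappa_pos by simp
qed

lemma cosk_less_iff:
  "0 \<le> t1 \<Longrightarrow> t1 \<le> Dk \<kappa> / 2 \<Longrightarrow> 0 \<le> t2 \<Longrightarrow> t2 \<le> Dk \<kappa> / 2 \<Longrightarrow> cosk t1 < cosk t2 \<longleftrightarrow> t2 < t1"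
  using cosk_le_iff[of t2 t1] by auto

lemma cosk_lipschitz: "cosk s - sqrt \<kappa> * \<bar>t - s\<bar> \<le> cosk t"
  using abs_cos_diff_le[of "sqrt \<kappa> * t" "sqrt \<kappa> * s"] sqrt_kappa_pos unfolding cosk_def
  by (auto simp: abs_mult right_diff_distrib[symmetric])

lemma cosk_dist_lipschitz: "\<bar>cosk (dist a c) - cosk (dist b c)\<bar> \<le> sqrt \<kappa> * dist (a::'a) b"
proof -
  have "\<bar>cosk (dist a c) - cosk (dist b c)\<bar> \<le> sqrt \<kappa> * \<bar>dist a c - dist b c\<bar>"
    using abs_cos_diff_le[of "sqrt \<kappa> * dist a c" "sqrt \<kappa> * dist b c"] sqrt_kappa_pos
    unfolding cosk_def by (simp add: abs_mult right_diff_distrib[symmetric])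
  also have "\<dots> \<le> sqrt \<kappa> * dist a b"
    using sqrt_kappa_pos dist_triangle3[of a c b] dist_triangle3[of b c a]
    by (intro mult_left_mono) (auto simp: dist_commute abs_le_iff)
  finally show ?thesis .
qed

lemma asym_radius_range:
  fixes y :: "nat \<Rightarrow> 'a"
  shows "0 \<le> asym_radius y z" "asym_radius y z \<le> Dk \<kappa> / 2"
    "asym_rad y z = ereal (asym_radius y z)"
  using asym_radius_bounds[of y z, OF dist_le_half_Dk] by blast+

lemma eventually_cosk_dist_ge:
  fixes y :: "nat \<Rightarrow> 'a"
  assumes "e > 0"
  shows "eventually (\<lambda>n. cosk (dist (y n) u) \<ge> cosk (asym_radius y u) - e) sequentially"
proof -
  have "eventually (\<lambda>n. dist (y n) u < asym_radius y u + e / sqrt \<kappa>) sequentially"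
    using eventually_dist_less_asym_radius[of y u, OF dist_le_half_Dk] assms sqrt_kappa_pos
    by simp
  then show ?thesis
  proof eventually_elim
    case (elim n)
    show ?case
    proof (cases "dist (y n) u \<le> asym_radius y u")
      case True
      then show ?thesis
        using cosk_le_iff[of "asym_radius y u" "dist (y n) u"] asym_radius_range[of y u]
          dist_le_half_Dk[of "y n" u] assms by auto
    next
      case False
      then have "sqrt \<kappa> * \<bar>dist (y n) u - asym_radius y u\<bar> \<le> e"
        using elim sqrt_kappa_pos by (simp add: field_simps)
      then show ?thesis using cosk_lipschitz[of "asym_radius y u" "dist (y n) u"] by linarith
    qed
  qed
qed

lemma cosk_asym_radius_ge:
  fixes y :: "nat \<Rightarrow> 'a"
  assumes ev: "eventually (\<lambda>n. a \<le> cosk (dist (y n) w)) sequentially"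
  shows "a \<le> cosk (asym_radius y w)"
proof (cases "a \<le> 0")
  case True
  then show ?thesis using cosk_nonneg asym_radius_range[of y w] by fastforce
next
  case False
  obtain n where "a \<le> cosk (dist (y n) w)" using ev eventually_sequentially by auto
  then have a: "0 < a" "a \<le> 1" using False cosk_le_one order_trans by (auto simp del: le_divide_eq_1)
  define t where "t = arccos a / sqrt \<kappa>"
  have "arccos a \<le> pi / 2" using a by (intro arccos_le_pi2) auto
  then have t: "0 \<le> t" "t \<le> Dk \<kappa> / 2"
    unfolding t_def using arccos_lbound[of a] a sqrt_kappa_half_Dk sqrt_kappa_pos
    by (auto simp: field_simps)
  have cosk_t: "cosk t = a" unfolding t_def cosk_def using sqrt_kappa_pos a by simp
  have "eventually (\<lambda>n. dist (y n) w \<le> t) sequentially"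
    using ev
  proof eventually_elim
    case (elim n)
    then show ?case
      using cosk_le_iff[of t "dist (y n) w"] cosk_t t dist_le_half_Dk[of "y n" w] by auto
  qed
  then have "asym_radius y w \<le> t" by (rule asym_radius_le[OF dist_le_half_Dk])
  then show ?thesis
    using cosk_le_iff[of t "asym_radius y w"] t asym_radius_range[of y w] cosk_t by auto
qed

lemma cosk_asym_radius_inequality:
  fixes y :: "nat \<Rightarrow> 'a"
  assumes K: "K > 0"
    and hyp: "\<And>e. e > 0 \<Longrightarrow> eventually (\<lambda>n. cosk (dist (y n) u) + cosk (dist (y n) v)
                                           \<le> K * cosk (dist (y n) w) + e) sequentially"
  shows "cosk (asym_radius y u) + cosk (asym_radius y v) \<le> K * cosk (asym_radius y w)"
proof (rule field_le_epsilon)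
  fix e :: real assume "e > 0"
  then have e3: "e / 3 > 0" by simp
  have "eventually (\<lambda>n. (cosk (asym_radius y u) + cosk (asym_radius y v) - e) / K
                       \<le> cosk (dist (y n) w)) sequentially"
    using hyp[OF e3] eventually_cosk_dist_ge[OF e3, of y u] eventually_cosk_dist_ge[OF e3, of y v]
    by eventually_elim (use K in \<open>simp add: divide_le_eq mult.commute\<close>)
  then have "(cosk (asym_radius y u) + cosk (asym_radius y v) - e) / K \<le> cosk (asym_radius y w)"
    by (rule cosk_asym_radius_ge)
  then show "cosk (asym_radius y u) + cosk (asym_radius y v) \<le> K * cosk (asym_radius y w) + e"
    using K by (simp add: divide_le_eq mult.commute)
qed


context
  assumes cat: "CAT \<kappa> (UNIV :: 'a set)"
begin

lemma midpoint_asym_radius: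
  fixes y :: "nat \<Rightarrow> 'a"
  obtains m where "cosk (asym_radius y u) + cosk (asym_radius y v)
                   \<le> 2 * cosk (dist u v / 2) * cosk (asym_radius y m)"
proof -
  obtain m where "\<And>z. cos (sqrt \<kappa> * dist z u) + cos (sqrt \<kappa> * dist z v)
      \<le> 2 * cos (sqrt \<kappa> * dist u v / 2) * cos (sqrt \<kappa> * dist z m)"
    using CAT_midpoint_cos_inequality[OF \<kappa>_pos cat diam] by blast
  then have m: "cosk (dist z u) + cosk (dist z v) \<le> 2 * cosk (dist u v / 2) * cosk (dist z m)" for z
    unfolding cosk_def by (simp add: mult.assoc)
  have "0 < 2 * cosk (dist u v / 2)"
    using cosk_pos[of "dist u v / 2"] dist_less_half_Dk[of u v] half_Dk_pos by auto
  then have "cosk (asym_radius y u) + cosk (asym_radius y v)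
             \<le> 2 * cosk (dist u v / 2) * cosk (asym_radius y m)"
  proof (rule cosk_asym_radius_inequality)
    fix e :: real assume "e > 0"
    then show "eventually (\<lambda>n. cosk (dist (y n) u) + cosk (dist (y n) v)
                 \<le> 2 * cosk (dist u v / 2) * cosk (dist (y n) m) + e) sequentially"
      using m by (intro always_eventually allI) (smt (verit))
  qed
  then show thesis by (rule that)
qed

lemma asym_center_unique:
  fixes y :: "nat \<Rightarrow> 'a"
  assumes center: "is_asym_center y u" and small: "asym_radius y u < Dk \<kappa> / 2" and "z \<noteq> u"
  shows "asym_radius y u < asym_radius y z"
proof (rule ccontr)
  assume "\<not> ?thesis"
  then have "cosk (asym_radius y u) \<le> cosk (asym_radius y z)"
    using cosk_le_iff asym_radius_range by auto
  obtain m where m: "cosk (asym_radius y u) + cosk (asym_radius y z)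
                     \<le> 2 * cosk (dist u z / 2) * cosk (asym_radius y m)"
    by (rule midpoint_asym_radius)
  have "cosk (dist u z / 2) < 1"
    using cosk_less_iff[of "dist u z / 2" 0] \<open>z \<noteq> u\<close> dist_le_half_Dk[of u z] half_Dk_pos by auto
  moreover have "cosk (asym_radius y m) \<le> cosk (asym_radius y u)"
    using center cosk_le_iff asym_radius_range unfolding is_asym_center_def by auto
  moreover have "0 < cosk (asym_radius y u)" using cosk_pos asym_radius_range small by auto
  moreover have "0 \<le> cosk (dist u z / 2)"
    using cosk_nonneg[of "dist u z / 2"] dist_le_half_Dk[of u z] half_Dk_pos by auto
  ultimately have "cosk (dist u z / 2) * cosk (asym_radius y m) < 1 * cosk (asym_radius y u)"
    by (meson mult_left_mono mult_strict_right_mono order_le_less_trans)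
  with m \<open>cosk (asym_radius y u) \<le> cosk (asym_radius y z)\<close> show False by linarith
qed

lemma asym_radius_minimizing_Cauchy:
  fixes y :: "nat \<Rightarrow> 'a"
  assumes R: "\<And>z. R \<le> asym_radius y z" "R < Dk \<kappa> / 2"
    and lim: "(\<lambda>n. asym_radius y (zs n)) \<longlonglongrightarrow> R"
  shows "Cauchy zs"
  unfolding Cauchy_def
proof (intro allI impI)
  fix e :: real assume "e > 0"
  define e' where "e' = min e (Dk \<kappa> / 2)"
  have e': "0 < e' / 2" "e' / 2 \<le> Dk \<kappa> / 2" using \<open>e > 0\<close> half_Dk_pos unfolding e'_def by auto
  have "0 \<le> R" by (rule LIMSEQ_le_const[OF lim]) (use asym_radius_range(1) in blast)
  then have cR: "cosk R > 0" using cosk_pos R(2) by blast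
  have "cosk (e' / 2) < 1" using cosk_less_iff[of "e' / 2" 0] e' by auto
  define t where "t = (1 - cosk (e' / 2)) * cosk R"
  have "t > 0" unfolding t_def using \<open>cosk (e' / 2) < 1\<close> cR by simp
  have "(\<lambda>n. cosk (asym_radius y (zs n))) \<longlonglongrightarrow> cosk R"
    unfolding cosk_def by (intro tendsto_intros lim)
  then have "eventually (\<lambda>n. cosk R - t < cosk (asym_radius y (zs n))) sequentially"
    using \<open>t > 0\<close> by (intro order_tendstoD(1)) auto
  then obtain N where N: "\<And>n. n \<ge> N \<Longrightarrow> cosk R - t < cosk (asym_radius y (zs n))"
    unfolding eventually_sequentially by blast
  show "\<exists>M. \<forall>m\<ge>M. \<forall>n\<ge>M. dist (zs m) (zs n) < e"
  proof (intro exI allI impI)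
    fix m n assume "N \<le> m" "N \<le> n"
    define d where "d = dist (zs m) (zs n) / 2"
    have d: "0 \<le> d" "d \<le> Dk \<kappa> / 2"
      unfolding d_def using dist_le_half_Dk[of "zs m" "zs n"] half_Dk_pos by auto
    obtain w where w: "cosk (asym_radius y (zs m)) + cosk (asym_radius y (zs n))
                       \<le> 2 * cosk d * cosk (asym_radius y w)"
      unfolding d_def by (rule midpoint_asym_radius)
    have "cosk (asym_radius y w) \<le> cosk R"
      using cosk_le_iff R \<open>0 \<le> R\<close> asym_radius_range by auto
    then have "2 * cosk d * cosk (asym_radius y w) \<le> 2 * cosk d * cosk R"
      using cosk_nonneg[OF d] by (intro mult_left_mono) auto
    then have "cosk R - t < cosk d * cosk R" using w N[OF \<open>N \<le> m\<close>] N[OF \<open>N \<le> n\<close>] by linarith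
    then have "cosk (e' / 2) < cosk d" using cR unfolding t_def by (simp add: algebra_simps)
    then have "d < e' / 2" using cosk_less_iff[of "e' / 2" d] e' d by auto
    then show "dist (zs m) (zs n) < e" unfolding d_def e'_def by auto
  qed
qed

lemma asym_center_exists:
  fixes y :: "nat \<Rightarrow> 'a"
  assumes complete: "complete (UNIV :: 'a set)" and small: "asym_radius y q < Dk \<kappa> / 2"
  obtains u where "is_asym_center y u"
proof -
  define R where "R = Inf (range (asym_radius y))"
  have bdd: "bdd_below (range (asym_radius y))"
    using asym_radius_range(1)[of y] by (intro bdd_belowI2) blast
  have R_le: "R \<le> asym_radius y z" for z unfolding R_def by (rule cInf_lower) (auto simp: bdd)
  have "\<exists>z. asym_radius y z < R + inverse (real (Suc n))" for n
    using cInf_less_iff[OF _ bdd, of "R + inverse (real (Suc n))"] unfolding R_def by auto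
  then obtain zs where zs: "\<And>n. asym_radius y (zs n) < R + inverse (real (Suc n))" by metis
  have lim: "(\<lambda>n. asym_radius y (zs n)) \<longlonglongrightarrow> R"
    by (rule tendsto_sandwich[OF _ _ tendsto_const LIMSEQ_inverse_real_of_nat_add])
       (use zs R_le in \<open>auto intro!: always_eventually less_imp_le\<close>)
  have "Cauchy zs"
    by (rule asym_radius_minimizing_Cauchy[OF R_le _ lim]) (use R_le[of q] small in simp)
  then obtain z where z: "zs \<longlonglongrightarrow> z" using completeE[OF complete] by blast
  have "(\<lambda>n. asym_radius y (zs n) + dist z (zs n)) \<longlonglongrightarrow> R + dist z z"
    by (intro tendsto_intros lim z)
  moreover have "asym_radius y z \<le> asym_radius y (zs n) + dist z (zs n)" for n
    by (rule asym_radius_triangle[of y z _ "zs n", OF dist_le_half_Dk dist_le_half_Dk])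
  ultimately have "asym_radius y z \<le> R + dist z z"
    by (intro LIMSEQ_le_const) auto
  then have "asym_radius y z \<le> asym_radius y w" for w using R_le[of w] by simp
  then have "is_asym_center y z" unfolding is_asym_center_def by blast
  then show thesis by (rule that)
qed

end

context
  fixes T :: "'a \<Rightarrow> 'a"
  assumes fv: "firmly_vicinal \<kappa> T"
begin

lemma firmly_vicinal_cosk:
  "let Cx = cosk (dist (T x) x); Cy = cosk (dist (T y) y) in
     (Cx\<^sup>2 * (1 + Cy\<^sup>2) * Cy + Cy\<^sup>2 * (1 + Cx\<^sup>2) * Cx) * cosk (dist (T x) (T y))
     \<ge> Cx\<^sup>2 * (1 + Cy\<^sup>2) * cosk (dist (T x) y) + Cy\<^sup>2 * (1 + Cx\<^sup>2) * cosk (dist (T y) x)"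
  using fv unfolding firmly_vicinal_def cosk_def by blast

lemma cosk_dist_fixed_point_le:
  assumes "T p = p"
  shows "cosk (dist x p) \<le> cosk (dist (T x) x) * cosk (dist (T x) p)"
proof -
  define Cx where "Cx = cosk (dist (T x) x)"
  have "(Cx\<^sup>2 * 2 + (1 + Cx\<^sup>2) * Cx) * cosk (dist (T x) p)
        \<ge> Cx\<^sup>2 * 2 * cosk (dist (T x) p) + (1 + Cx\<^sup>2) * cosk (dist x p)"
    using firmly_vicinal_cosk[of x p] assms unfolding Let_def Cx_def[symmetric]
    by (simp add: dist_commute)
  then have "(1 + Cx\<^sup>2) * cosk (dist x p) \<le> (1 + Cx\<^sup>2) * (Cx * cosk (dist (T x) p))"
    by (simp add: algebra_simps)
  moreover have "0 < 1 + Cx\<^sup>2" by (simp add: add_pos_nonneg)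
  ultimately show ?thesis unfolding Cx_def by simp
qed

lemma dist_fixed_point_le:
  assumes "T p = p"
  shows "dist (T x) p \<le> dist x p"
proof -
  have "cosk (dist x p) \<le> cosk (dist (T x) x) * cosk (dist (T x) p)"
    by (rule cosk_dist_fixed_point_le[OF assms])
  also have "\<dots> \<le> cosk (dist (T x) p)"
    using cosk_dist_pos[of "T x" p] cosk_dist_pos[of "T x" x] cosk_le_one
    by (intro mult_left_le_one_le) auto
  finally show ?thesis using cosk_le_iff[of "dist x p" "dist (T x) p"] dist_le_half_Dk by auto
qed

lemma decseq_dist_iterate_fixed_point:
  assumes "T p = p"
  shows "decseq (\<lambda>n. dist ((T ^^ n) x) p)"
  by (rule decseq_SucI) (simp add: dist_fixed_point_le[OF assms])

lemma asym_radius_orbit_fixed_point_le: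
  assumes "T p = p"
  shows "asym_radius ((\<lambda>n. (T ^^ n) x) \<circ> r) p \<le> dist x p"
  using decseq_dist_iterate_fixed_point[OF assms, of x, unfolded decseq_def]
  by (intro asym_radius_le[of _ p, OF dist_le_half_Dk]) (auto dest: spec[of _ 0])

lemma asym_radius_orbit_subseq:
  assumes "T q = q" "strict_mono r"
  shows "asym_radius ((\<lambda>n. (T ^^ n) x) \<circ> r) q = asym_radius (\<lambda>n. (T ^^ n) x) q"
proof -
  obtain L where L: "(\<lambda>n. dist ((T ^^ n) x) q) \<longlonglongrightarrow> L"
    using decseq_convergent[OF decseq_dist_iterate_fixed_point[OF assms(1), of x], of 0] by auto
  have "asym_radius ((\<lambda>n. (T ^^ n) x) \<circ> r) q = L"
    by (rule asym_radius_eq_limit[of _ q, OF dist_le_half_Dk])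
       (use LIMSEQ_subseq_LIMSEQ[OF L assms(2)] in \<open>simp add: o_def\<close>)
  moreover have "asym_radius (\<lambda>n. (T ^^ n) x) q = L"
    by (rule asym_radius_eq_limit[of _ q, OF dist_le_half_Dk L])
  ultimately show ?thesis by simp
qed

text \<open>Asymptotic regularity: the ratio \<open>cos d(T\<^sup>n x, p) / cos d(T\<^sup>n\<^sup>+\<^sup>1 x, p)\<close> bounds
  \<open>cos d(T\<^sup>n\<^sup>+\<^sup>1 x, T\<^sup>n x)\<close> from below and tends to \<open>1\<close>.\<close>
lemma asymptotically_regular:
  assumes p: "T p = p"
  shows "(\<lambda>n. dist (T ((T ^^ n) x)) ((T ^^ n) x)) \<longlonglongrightarrow> 0"
proof -
  define d where "d n = dist ((T ^^ n) x) p" for n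
  obtain L where L: "d \<longlonglongrightarrow> L" "\<And>n. L \<le> d n"
    using decseq_convergent[of d 0] decseq_dist_iterate_fixed_point[OF p]
    unfolding d_def by auto
  have "0 \<le> L" by (rule LIMSEQ_le_const[OF L(1)]) (simp add: d_def)
  moreover have "L < Dk \<kappa> / 2" using L(2)[of 0] dist_less_half_Dk[of x p] unfolding d_def by simp
  ultimately have "cosk L > 0" by (rule cosk_pos)
  have "(\<lambda>n. cosk (d n)) \<longlonglongrightarrow> cosk L" unfolding cosk_def by (intro tendsto_intros L(1))
  then have "(\<lambda>n. cosk (d n) / cosk (d (Suc n))) \<longlonglongrightarrow> cosk L / cosk L"
    using \<open>cosk L > 0\<close> by (intro tendsto_divide LIMSEQ_Suc) auto
  then have ratio: "(\<lambda>n. cosk (d n) / cosk (d (Suc n))) \<longlonglongrightarrow> 1"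
    using \<open>cosk L > 0\<close> by simp
  define a where "a n = cosk (dist (T ((T ^^ n) x)) ((T ^^ n) x))" for n
  have "cosk (d n) / cosk (d (Suc n)) \<le> a n" for n
    using cosk_dist_fixed_point_le[OF p, of "(T ^^ n) x"] cosk_dist_pos
    unfolding a_def d_def by (simp add: divide_le_eq mult.commute)
  then have "a \<longlonglongrightarrow> 1"
    using cosk_le_one unfolding a_def
    by (intro tendsto_sandwich[OF _ _ ratio tendsto_const]) auto
  moreover have "a n \<in> {-1..1}" for n unfolding a_def cosk_def by simp
  ultimately have "(\<lambda>n. arccos (a n) / sqrt \<kappa>) \<longlonglongrightarrow> arccos 1 / sqrt \<kappa>"
    using \<kappa>_pos
    by (intro tendsto_divide tendsto_const continuous_on_tendsto_compose[OF continuous_on_arccos'])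
      auto
  moreover have "arccos (a n) / sqrt \<kappa> = dist (T ((T ^^ n) x)) ((T ^^ n) x)" for n
  proof -
    have "0 \<le> sqrt \<kappa> * dist (T ((T ^^ n) x)) ((T ^^ n) x) \<and>
          sqrt \<kappa> * dist (T ((T ^^ n) x)) ((T ^^ n) x) \<le> pi / 2"
      by (rule sqrt_kappa_mult_le[OF zero_le_dist dist_le_half_Dk])
    then have "0 \<le> sqrt \<kappa> * dist (T ((T ^^ n) x)) ((T ^^ n) x)"
      "sqrt \<kappa> * dist (T ((T ^^ n) x)) ((T ^^ n) x) \<le> pi"
      using pi_gt_zero by linarith+
    then show ?thesis unfolding a_def cosk_def using sqrt_kappa_pos by (simp add: arccos_cos)
  qed
  ultimately show ?thesis by simp
qed

lemma cosk_dist_image_ge: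
  assumes small: "sqrt \<kappa> * dist (T x) x \<le> 1/2"
  shows "cosk (dist x u) - 10 * (sqrt \<kappa> * dist (T x) x) \<le> cosk (dist x (T u))"
proof -
  define h where "h = sqrt \<kappa> * dist (T x) x"
  define a where "a = cosk (dist (T x) x)"
  define C where "C = cosk (dist (T u) u)"
  have a: "1/2 \<le> a" "a \<le> 1"
    using cosk_lipschitz[of 0 "dist (T x) x"] small cosk_le_one unfolding a_def by auto
  have C: "0 < C" "C \<le> 1" unfolding C_def using cosk_dist_pos cosk_le_one by auto
  have "0 \<le> h" unfolding h_def using sqrt_kappa_pos by simp
  have "\<bar>cosk (dist (T x) (T u)) - cosk (dist x (T u))\<bar> \<le> h"
    "\<bar>cosk (dist (T x) u) - cosk (dist x u)\<bar> \<le> h"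
    unfolding h_def by (rule cosk_dist_lipschitz)+
  moreover have "(a^2*(1+C^2)*C + C^2*(1+a^2)*a) * cosk (dist (T x) (T u))
      \<ge> a^2*(1+C^2) * cosk (dist (T x) u) + C^2*(1+a^2) * cosk (dist x (T u))"
    using firmly_vicinal_cosk[of x u] unfolding Let_def a_def[symmetric] C_def[symmetric]
    by (simp add: dist_commute)
  ultimately have "cosk (dist x u) - 10 * h \<le> cosk (dist x (T u))"
    using cosk_dist_pos[of "T x" "T u"] cosk_dist_pos[of x "T u"] \<open>0 \<le> h\<close>
    by (intro vicinal_perturbation_bound[OF a C]) (auto simp: abs_le_iff)
  then show ?thesis unfolding h_def .
qed

lemma asym_center_orbit_fixed:
  assumes cat: "CAT \<kappa> (UNIV :: 'a set)" and p: "T p = p" and r: "strict_mono r"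
    and center: "is_asym_center ((\<lambda>n. (T ^^ n) x) \<circ> r) u"
  shows "T u = u"
proof -
  define y where "y = (\<lambda>n. (T ^^ n) x) \<circ> r"
  have small: "asym_radius y u < Dk \<kappa> / 2"
    using center[unfolded is_asym_center_def, rule_format, of p]
      asym_radius_orbit_fixed_point_le[OF p, of x r] dist_less_half_Dk[of x p]
    unfolding y_def by linarith
  have "(\<lambda>n. sqrt \<kappa> * dist (T (y n)) (y n)) \<longlonglongrightarrow> 0"
    using tendsto_mult_right_zero[OF LIMSEQ_subseq_LIMSEQ[OF asymptotically_regular[OF p] r]]
    unfolding y_def o_def .
  have "cosk (asym_radius y u) + cosk (asym_radius y u) \<le> 2 * cosk (asym_radius y (T u))"
  proof (rule cosk_asym_radius_inequality)
    fix e :: real assume "e > 0"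
    then have "eventually (\<lambda>n. sqrt \<kappa> * dist (T (y n)) (y n) < min (1/2) (e/20)) sequentially"
      by (intro order_tendstoD(2)[OF \<open>(\<lambda>n. _) \<longlonglongrightarrow> 0\<close>]) auto
    then show "eventually (\<lambda>n. cosk (dist (y n) u) + cosk (dist (y n) u)
                              \<le> 2 * cosk (dist (y n) (T u)) + e) sequentially"
    proof eventually_elim
      case (elim n)
      then show ?case using cosk_dist_image_ge[of "y n" u] by auto
    qed
  qed simp
  then have "asym_radius y (T u) \<le> asym_radius y u"
    using cosk_le_iff asym_radius_range by auto
  then show "T u = u"
    using asym_center_unique[OF cat center[folded y_def] small] by (meson not_le)
qed

lemma orbit_asym_center:
  assumes complete: "complete (UNIV :: 'a set)" and cat: "CAT \<kappa> (UNIV :: 'a set)"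
    and p: "T p = p" and r: "strict_mono r"
  obtains u where "T u = u" "is_asym_center ((\<lambda>n. (T ^^ n) x) \<circ> r) u"
    "asym_radius ((\<lambda>n. (T ^^ n) x) \<circ> r) u < Dk \<kappa> / 2"
proof -
  have small: "asym_radius ((\<lambda>n. (T ^^ n) x) \<circ> r) p < Dk \<kappa> / 2"
    using asym_radius_orbit_fixed_point_le[OF p, of x r] dist_less_half_Dk[of x p] by linarith
  obtain u where u: "is_asym_center ((\<lambda>n. (T ^^ n) x) \<circ> r) u"
    using asym_center_exists[OF cat complete small] by blast
  moreover have "T u = u" by (rule asym_center_orbit_fixed[OF cat p r u])
  moreover have "asym_radius ((\<lambda>n. (T ^^ n) x) \<circ> r) u < Dk \<kappa> / 2"
    using u small unfolding is_asym_center_def by (meson le_less_trans)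
  ultimately show thesis using that by blast
qed

text \<open>Asymptotic radii about fixed points do not depend on the subsequence, so two
  fixed asymptotic centres would each be strictly better than the other.\<close>
lemma orbit_asym_centers_eq:
  assumes cat: "CAT \<kappa> (UNIV :: 'a set)" and "T u = u" "T p = p" and r: "strict_mono r"
    and u: "is_asym_center ((\<lambda>n. (T ^^ n) x) \<circ> r) u"
      "asym_radius ((\<lambda>n. (T ^^ n) x) \<circ> r) u < Dk \<kappa> / 2"
    and p: "is_asym_center (\<lambda>n. (T ^^ n) x) p" "asym_radius (\<lambda>n. (T ^^ n) x) p < Dk \<kappa> / 2"
  shows "u = p"
proof (rule ccontr)
  assume "u \<noteq> p"
  then have "asym_radius (\<lambda>n. (T ^^ n) x) p < asym_radius (\<lambda>n. (T ^^ n) x) u"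
    "asym_radius ((\<lambda>n. (T ^^ n) x) \<circ> r) u < asym_radius ((\<lambda>n. (T ^^ n) x) \<circ> r) p"
    using asym_center_unique[OF cat p] asym_center_unique[OF cat u] by auto
  then show False
    using asym_radius_orbit_subseq[OF \<open>T u = u\<close> r] asym_radius_orbit_subseq[OF \<open>T p = p\<close> r]
    by simp
qed

end

end

theorem corollary5p2:
  fixes \<kappa> :: real and T :: "'a::complete_space \<Rightarrow> 'a"
  assumes "\<kappa> > 0"
    and "CAT \<kappa> (UNIV :: 'a set)"
    and "\<forall>v v' :: 'a. dist v v' < Dk \<kappa> / 2"
    and "firmly_vicinal \<kappa> T"
    and "Fix T \<noteq> {}"
  shows "\<forall>x. \<exists>p\<in>Fix T. Delta_convergent (\<lambda>n. (T ^^ n) x) p"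
proof
  fix x
  obtain p0 where "T p0 = p0" using assms(5) unfolding Fix_def by auto
  note center = orbit_asym_center[OF assms(1,3,4) complete_UNIV assms(2) \<open>T p0 = p0\<close>, of _ x]
  obtain p where p: "T p = p" "is_asym_center (\<lambda>n. (T ^^ n) x) p"
    "asym_radius (\<lambda>n. (T ^^ n) x) p < Dk \<kappa> / 2"
    using center[of id] by (auto simp: strict_mono_def)
  have "Delta_convergent (\<lambda>n. (T ^^ n) x) p"
    unfolding Delta_convergent_def
  proof (intro allI impI)
    fix r :: "nat \<Rightarrow> nat" and z assume r: "strict_mono r" and "z \<noteq> p"
    obtain u where u: "T u = u" "is_asym_center ((\<lambda>n. (T ^^ n) x) \<circ> r) u"
      "asym_radius ((\<lambda>n. (T ^^ n) x) \<circ> r) u < Dk \<kappa> / 2"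
      using center[OF r] by blast
    have "u = p" by (rule orbit_asym_centers_eq[OF assms(1,3,4,2) u(1) p(1) r u(2,3) p(2,3)])
    then have "asym_radius ((\<lambda>n. (T ^^ n) x) \<circ> r) p < asym_radius ((\<lambda>n. (T ^^ n) x) \<circ> r) z"
      using asym_center_unique[OF assms(1,3,2) u(2,3)] \<open>z \<noteq> p\<close> by blast
    then show "asym_rad ((\<lambda>n. (T ^^ n) x) \<circ> r) p < asym_rad ((\<lambda>n. (T ^^ n) x) \<circ> r) z"
      using asym_radius_range(3)[OF assms(1,3)] by simp
  qed
  then show "\<exists>p\<in>Fix T. Delta_convergent (\<lambda>n. (T ^^ n) x) p" using p(1) unfolding Fix_def by blast
qed

end
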